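(* Let $q$ be a prime power and $n\ge1$ with $q^n>2$. Let $\beta,\gamma\in\mathbb{F}_q$ with $\beta\neq-\gamma$, and let $f(x)\neq x-1$ be a primitive polynomial of degree $n$ over $\mathbb{F}_q$. Set $h(x)=f\big((\beta+\gamma)x+1\big)$ and $h^*(x)=x^n h(1/x)$. Then the polynomial $$F(x)=\frac{(x-\gamma)^n\, f\!\left(\dfrac{x^{q^n}+\beta}{x-\gamma}\right)}{h^*(x-\gamma)}$$ is an irreducible polynomial of degree $n(q^n-1)$ over $\mathbb{F}_q$.
   Context: A primitive polynomial of degree $n$ over $\mathbb{F}_q$ is a monic irreducible polynomial of degree $n$ whose roots generate the multiplicative group $\mathbb{F}_{q^n}^*$. *)

theory Defs
  imports "HOL-Computational_Algebra.Computational_Algebra"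
begin

text \<open>The base field F_q is a finite field type 'a, with q = card (UNIV :: 'a set).
  F_{q^n} is realised as F_q[x]/(f); the class of x there is a root of f.
  So f is primitive of degree n iff f is monic irreducible of degree n and
  the root x mod f has multiplicative order q^n - 1, i.e. f divides
  x^(q^n-1) - 1 but no x^k - 1 with 0 < k < q^n - 1.\<close>

definition primitive_poly :: "nat \<Rightarrow> 'a::{field,finite} poly \<Rightarrow> bool" where
  "primitive_poly n f \<longleftrightarrow>
     degree f = n \<and> lead_coeff f = 1 \<and> irreducible f \<and>
     f dvd (monom 1 (card (UNIV :: 'a set)^n - 1) - 1) \<and>
     (\<forall>k. 0 < k \<and> k < card (UNIV :: 'a set)^n - 1 \<longrightarrow> \<not> f dvd (monom 1 k - 1))"

text \<open>(x-\<gamma>)^n f((x^(q^n)+\<beta>)/(x-\<gamma>)) written as a polynomial.\<close>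
definition hom_num :: "nat \<Rightarrow> 'a::{field,finite} \<Rightarrow> 'a \<Rightarrow> 'a poly \<Rightarrow> 'a poly" where
  "hom_num n \<beta> \<gamma> f =
     (\<Sum>i\<le>n. smult (coeff f i) ((monom 1 (card (UNIV :: 'a set)^n) + [:\<beta>:]) ^ i * [:-\<gamma>, 1:] ^ (n - i)))"

definition h_poly :: "'a::{field,finite} \<Rightarrow> 'a \<Rightarrow> 'a poly \<Rightarrow> 'a poly" where
  "h_poly \<beta> \<gamma> f = pcompose f [:1, \<beta> + \<gamma>:]"

text \<open>h*(x) = x^n h(1/x)\<close>
definition h_star :: "nat \<Rightarrow> 'a::{field,finite} \<Rightarrow> 'a \<Rightarrow> 'a poly \<Rightarrow> 'a poly" where
  "h_star n \<beta> \<gamma> f = (\<Sum>i\<le>n. monom (coeff (h_poly \<beta> \<gamma> f) i) (n - i))"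

definition den_poly :: "nat \<Rightarrow> 'a::{field,finite} \<Rightarrow> 'a \<Rightarrow> 'a poly \<Rightarrow> 'a poly" where
  "den_poly n \<beta> \<gamma> f = pcompose (h_star n \<beta> \<gamma> f) [:-\<gamma>, 1:]"

end

theory Submission
  imports Defs "HOL-Algebra.Algebraic_Closure_Type"
begin

(* HOL-Algebra, needed for the algebraic closure, reuses these names for its own notions *)
hide_const (open) module.smult Polynomials.degree Polynomials.lead_coeff
  up_ring.monom up_ring.coeff Divisibility.irreducible Divisibility.prime

text \<open>
  Let \<open>q = |\<bbbF>\<^sub>q|\<close>, \<open>Q = q\<^sup>n\<close>, \<open>U = X\<^sup>Q + \<beta>\<close>, \<open>P = X + \<beta>\<close> and \<open>V = X - \<gamma>\<close>.  The numerator
  \<open>N = V\<^sup>n f(U/V)\<close> and the denominator \<open>D = h\<^sup>*(X - \<gamma>) = V\<^sup>n f(P/V)\<close> are both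
  homogenisations of \<open>f\<close>, and the proof runs as follows.

  \<^item> \<open>f\<close> divides \<open>X\<^sup>Q - X\<close>; homogenising at \<open>(P, V)\<close> and using \<open>P\<^sup>Q = X\<^sup>Q + \<beta>\<close>,
    \<open>V\<^sup>Q = X\<^sup>Q - \<gamma>\<close> shows that \<open>D\<close> divides \<open>X\<^sup>Q - X = U - P\<close>, hence \<open>N - D\<close>.
  \<^item> \<open>deg N = nQ\<close> and \<open>deg D = n\<close> (because \<open>f(1) \<noteq> 0\<close>), so \<open>F = N/D\<close> has degree \<open>n(Q - 1)\<close>.
  \<^item> Let \<open>g\<close> be an irreducible factor of \<open>F\<close> with root \<open>z\<close> in the algebraic closure; then
    \<open>w = U(z)/V(z)\<close> is a root of \<open>f\<close>, of multiplicative order \<open>Q - 1\<close>.  If \<open>z\<^sup>Q = z\<close>, then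
    \<open>z\<close> is also a root of \<open>D\<close>, so \<open>g\<^sup>2\<close> divides \<open>N\<close>; but by Euler's identity for the
    homogenisation and the separability of \<open>f\<close>, \<open>N\<close> has only simple roots.  Otherwise
    a translation by an \<open>\<bbbF>\<^sub>Q\<close>-point turns the \<open>Q\<close>-Frobenius at \<open>z\<close> into multiplication by
    \<open>w\<close>, which forces the Frobenius period of \<open>z\<close>, and hence \<open>deg g\<close>, to be at least
    \<open>n(Q - 1)\<close>.

  So every irreducible factor of \<open>F\<close> has degree \<open>deg F\<close>, and \<open>F\<close> is irreducible.
\<close>

section \<open>Arithmetic of a finite field\<close>

text \<open>Fermat's little theorem for a finite field with \<open>q\<close> elements: \<open>x\<^sup>q = x\<close>.
  (The library proves this for the class \<open>finite_field\<close>; the theorem below is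
  stated for \<open>{field, finite}\<close>, so we need it at that sort.)\<close>

lemma finite_field_power_card:
  fixes x :: "'a :: {field,finite}"
  shows "x ^ card (UNIV :: 'a set) = x"
proof (cases "x = 0")
  case False
  define q where "q = card (UNIV :: 'a set)"
  have q: "q = Suc (q - 1)"
    using finite_UNIV_card_ge_0[where 'a='a] by (simp add: q_def)
  have "(\<Prod>y\<in>UNIV-{0}. x * y) = (\<Prod>y\<in>UNIV-{0}. y)"
    \<comment> \<open>multiplication by \<open>x\<close> permutes the nonzero elements\<close>
    by (rule prod.reindex_bij_witness[of _ "\<lambda>y. y / x" "\<lambda>y. x * y"]) (use False in auto)
  moreover have "(\<Prod>y\<in>UNIV-{0}. x * y) = x ^ (q - 1) * (\<Prod>y\<in>UNIV-{0}. y)"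
    by (simp add: prod.distrib q_def)
  ultimately have "x ^ (q - 1) = 1"
    using False by simp
  moreover have "x ^ q = x * x ^ (q - 1)"
    using q by (metis power_Suc)
  ultimately show ?thesis
    by (simp add: q_def)
qed (use finite_UNIV_card_ge_0[where 'a='a] in simp)

lemma finite_field_power_card_power:
  fixes x :: "'a :: {field,finite}"
  shows "x ^ (card (UNIV :: 'a set) ^ j) = x"
  by (induction j) (simp_all add: finite_field_power_card power_mult)

lemma finite_field_card_ge_2: "card (UNIV :: 'a :: {field,finite} set) \<ge> 2"
proof -
  have "card {0, 1::'a} \<le> card (UNIV :: 'a set)"
    by (intro card_mono) auto
  thus ?thesis
    by simp
qed

text \<open>The inner binomial coefficients \<open>q choose k\<close> vanish in a field with \<open>q\<close> elements:
  the polynomial \<open>(X + 1)\<^sup>q - X\<^sup>q - 1\<close> has degree below \<open>q\<close> and, by Fermat,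
  every element of the field as a root, so it is zero.\<close>

lemma finite_field_card_choose_eq_0:
  assumes "0 < k" "k < card (UNIV :: 'a :: {field,finite} set)"
  shows "of_nat (card (UNIV :: 'a set) choose k) = (0::'a)"
proof -
  define q where "q = card (UNIV :: 'a set)"
  have q2: "q \<ge> 2"
    using finite_field_card_ge_2 q_def by auto
  define P :: "'a poly" where "P = [:1,1:] ^ q - monom 1 q - 1"
  have le: "degree P \<le> q"
    unfolding P_def
    by (intro degree_diff_le order.trans[OF degree_power_le]) (simp_all add: degree_monom_le)
  have "coeff P q = 0"
    using coeff_linear_power[of "1::'a" q] q2 by (simp add: P_def)
  hence "degree P \<noteq> q \<or> P = 0"
    by (metis leading_coeff_0_iff)
  hence deg_P: "degree P < q"
    using le q2 by fastforce
  have "P = 0"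
  proof (rule ccontr)
    assume "P \<noteq> 0"
    hence "card {x. poly P x = 0} \<le> degree P"
      by (rule card_poly_roots_bound)
    moreover have "{x. poly P x = 0} = UNIV"
      by (auto simp: P_def poly_monom q_def finite_field_power_card add.commute)
    ultimately show False
      using deg_P q_def by simp
  qed
  hence "coeff P k = 0"
    by simp
  moreover have "coeff P k = coeff ([:1,1::'a:] ^ q) k"
    using assms by (simp add: P_def q_def)
  ultimately show ?thesis
    using assms by (simp add: coeff_linear_poly_power q_def)
qed

lemma finite_field_of_nat_card: "of_nat (card (UNIV :: 'a :: {field,finite} set)) = (0::'a)"
  using finite_field_card_choose_eq_0[where 'a='a, of 1] finite_field_card_ge_2[where 'a='a]
  by simp

text \<open>Freshman's dream for the exponent \<open>q\<close>, in every commutative ring whose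
  characteristic equals that of the field with \<open>q\<close> elements (the field itself, its
  polynomial ring, its algebraic closure): the inner binomial coefficients vanish there too.\<close>

lemma frobenius_add_card:
  fixes x y :: "'b :: comm_ring_1"
  assumes char: "CHAR('b) = CHAR('a :: {field,finite})"
  shows "(x + y) ^ card (UNIV :: 'a set) = x ^ card (UNIV :: 'a set) + y ^ card (UNIV :: 'a set)"
proof -
  define q where "q = card (UNIV :: 'a set)"
  have "(x + y) ^ q = (\<Sum>k\<le>q. of_nat (q choose k) * x ^ k * y ^ (q - k))"
    by (rule binomial_ring)
  also have "\<dots> = (\<Sum>k\<in>{0,q}. of_nat (q choose k) * x ^ k * y ^ (q - k))"
  proof (intro sum.mono_neutral_right ballI)
    fix k assume "k \<in> {..q} - {0, q}"
    hence "of_nat (q choose k) = (0::'a)"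
      unfolding q_def by (intro finite_field_card_choose_eq_0) (auto simp: q_def)
    hence "of_nat (q choose k) = (0::'b)"
      by (simp add: of_nat_eq_0_iff_char_dvd char)
    thus "of_nat (q choose k) * x ^ k * y ^ (q - k) = 0"
      by simp
  qed auto
  finally show ?thesis
    using finite_field_card_ge_2[where 'a='a] by (simp add: q_def add_ac)
qed

lemma frobenius_add:
  fixes x y :: "'b :: comm_ring_1"
  assumes "CHAR('b) = CHAR('a :: {field,finite})"
  shows "(x + y) ^ (card (UNIV :: 'a set) ^ j)
           = x ^ (card (UNIV :: 'a set) ^ j) + y ^ (card (UNIV :: 'a set) ^ j)"
  by (induction j arbitrary: x y) (simp_all add: power_mult frobenius_add_card[OF assms])

lemma frobenius_diff:
  fixes x y :: "'b :: comm_ring_1"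
  assumes "CHAR('b) = CHAR('a :: {field,finite})"
  shows "(x - y) ^ (card (UNIV :: 'a set) ^ j)
           = x ^ (card (UNIV :: 'a set) ^ j) - y ^ (card (UNIV :: 'a set) ^ j)"
  using frobenius_add[OF assms, of "x - y" y j] by (simp add: algebra_simps)

lemma frobenius_inj:
  fixes x y :: "'b :: idom"
  assumes "CHAR('b) = CHAR('a :: {field,finite})"
    and "x ^ (card (UNIV :: 'a set) ^ j) = y ^ (card (UNIV :: 'a set) ^ j)"
  shows "x = y"
proof -
  have "(x - y) ^ (card (UNIV :: 'a set) ^ j) = 0"
    using assms by (simp add: frobenius_diff[OF assms(1)])
  thus ?thesis
    by simp
qed

lemma linear_power_card_power:
  "[:c, 1:] ^ (card (UNIV :: 'a set) ^ j) = monom 1 (card (UNIV :: 'a set) ^ j) + [:c::'a::{field,finite}:]"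
proof -
  have "[:c, 1:] = [:c:] + monom 1 1"
    by (simp add: monom_Suc)
  thus ?thesis
    by (simp add: frobenius_add[OF semiring_char_poly] monom_power poly_const_pow
        finite_field_power_card_power add.commute)
qed

lemma smult_sum_right: "smult c (\<Sum>i\<in>A. p i) = (\<Sum>i\<in>A. smult c (p i))"
  by (induction A rule: infinite_finite_induct) (simp_all add: smult_add_right)

lemma pcompose_power_left: "pcompose (p ^ k) r = pcompose p r ^ k"
  for p r :: "'b::comm_semiring_1 poly"
  by (induction k) (simp_all add: pcompose_1 pcompose_mult)

lemma pderiv_sum: "pderiv (\<Sum>i\<in>A. p i) = (\<Sum>i\<in>A. pderiv (p i))"
  by (induction A rule: infinite_finite_induct) (simp_all add: pderiv_add)

text \<open>In positive characteristic the derivative may drop more than one degree.\<close>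

lemma degree_pderiv_le: "degree (pderiv p) \<le> degree p - 1"
  by (rule degree_le) (simp add: coeff_pderiv coeff_eq_0)

lemma square_dvd_imp_dvd_pderiv:
  fixes g p :: "'b::idom poly"
  assumes "g * g dvd p"
  shows "g dvd pderiv p"
proof -
  from assms obtain s where "p = g * g * s"
    by (elim dvdE)
  hence "pderiv p = g * (pderiv (g * s) + s * pderiv g)"
    by (simp add: pderiv_mult algebra_simps)
  thus ?thesis
    by simp
qed

lemma irreducible_factor_exists:
  fixes a :: "'a::field poly"
  assumes "a \<noteq> 0" "\<not> is_unit a"
  shows "\<exists>g. irreducible g \<and> g dvd a \<and> degree g \<le> degree a"
  using assms
proof (induction "degree a" arbitrary: a rule: less_induct)
  case less
  show ?case
  proof (cases "irreducible a")
    case False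
    then obtain x y where xy: "a = x * y" "\<not> is_unit x" "\<not> is_unit y"
      using less.prems by (auto simp: Factorial_Ring.irreducible_def)
    have "x \<noteq> 0" "y \<noteq> 0"
      using xy less.prems by auto
    moreover have "degree y \<noteq> 0"
      using xy(3) \<open>y \<noteq> 0\<close> is_unit_iff_degree by blast
    ultimately have "degree x < degree a"
      using xy(1) by (simp add: degree_mult_eq)
    then obtain g where "irreducible g" "g dvd x" "degree g \<le> degree x"
      using less.hyps \<open>x \<noteq> 0\<close> xy(2) by blast
    thus ?thesis
      using xy(1) \<open>degree x < degree a\<close> by (intro exI[of _ g]) auto
  qed auto
qed

section \<open>Homogenisation\<close>

text \<open>For a polynomial \<open>p\<close> and a bound \<open>m \<ge> degree p\<close>, \<open>homog m p u v\<close> is the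
  homogenised substitution \<open>v\<^sup>m p(u/v) = \<Sum>\<^sub>i\<^sub>\<le>\<^sub>m p\<^sub>i u\<^sup>i v\<^sup>m\<^sup>-\<^sup>i\<close>.  Both the numerator
  \<open>hom_num\<close> and the denominator \<open>den_poly\<close> of the theorem are of this form.\<close>

definition homog :: "nat \<Rightarrow> 'b::comm_ring_1 poly \<Rightarrow> 'b poly \<Rightarrow> 'b poly \<Rightarrow> 'b poly" where
  "homog m p u v = (\<Sum>i\<le>m. smult (coeff p i) (u ^ i * v ^ (m - i)))"

lemma homog_zero [simp]: "homog m 0 u v = 0"
  by (simp add: homog_def)

lemma homog_0_bound [simp]: "homog 0 p u v = [:coeff p 0:]"
  by (simp add: homog_def)

lemma homog_add: "homog m (p + r) u v = homog m p u v + homog m r u v"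
  by (simp add: homog_def smult_add_left sum.distrib)

lemma homog_smult: "homog m (smult c p) u v = smult c (homog m p u v)"
  by (simp add: homog_def smult_sum_right mult.assoc)

lemma homog_diff: "homog m (p - r) u v = homog m p u v - homog m r u v"
  by (simp add: homog_def smult_diff_left sum_subtractf)

lemma homog_monom:
  assumes "k \<le> m"
  shows "homog m (monom c k) u v = smult c (u ^ k * v ^ (m - k))"
proof -
  have "homog m (monom c k) u v = (\<Sum>i\<le>m. if i = k then smult c (u ^ k * v ^ (m - k)) else 0)"
    unfolding homog_def by (intro sum.cong refl) simp
  thus ?thesis
    using assms by simp
qed

lemma homog_pCons: "homog (Suc m) (pCons a p) u v = smult a (v ^ Suc m) + u * homog m p u v"
  unfolding homog_def sum.atMost_Suc_shift by (simp add: sum_distrib_left mult_ac)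

lemma homog_shift:
  assumes "degree p \<le> m"
  shows "homog (k + m) p u v = v ^ k * homog m p u v"
proof -
  have "homog (k + m) p u v = (\<Sum>i\<le>m. smult (coeff p i) (u ^ i * v ^ (k + m - i)))"
    unfolding homog_def
    by (rule sum.mono_neutral_right) (use assms in \<open>auto simp: coeff_eq_0\<close>)
  also have "\<dots> = (\<Sum>i\<le>m. v ^ k * smult (coeff p i) (u ^ i * v ^ (m - i)))"
    by (intro sum.cong refl) (simp add: mult.left_commute flip: power_add)
  finally show ?thesis
    by (simp add: homog_def sum_distrib_left)
qed

lemma homog_mult:
  assumes "degree p \<le> m1" "degree r \<le> m2"
  shows "homog (m1 + m2) (p * r) u v = homog m1 p u v * homog m2 r u v"
  using assms(1)
proof (induction p arbitrary: m1 rule: pCons_induct)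
  case (pCons a p)
  show ?case
  proof (cases m1)
    case 0
    hence "pCons a p = [:a:]"
      using pCons.prems by (cases "p = 0") auto
    thus ?thesis
      using 0 by (simp add: homog_smult)
  next
    case (Suc k)
    have IH: "homog (k + m2) (p * r) u v = homog k p u v * homog m2 r u v"
      using pCons.prems Suc by (intro pCons.IH) (auto split: if_splits)
    have split: "pCons a p * r = smult a r + pCons 0 (p * r)"
      by simp
    have "homog (m1 + m2) (smult a r) u v = smult a (v ^ m1 * homog m2 r u v)"
      using homog_shift[OF assms(2), of m1 u v] by (simp add: homog_smult)
    moreover have "homog (m1 + m2) (pCons 0 (p * r)) u v = u * homog (k + m2) (p * r) u v"
      using Suc homog_pCons[of "k + m2" 0 "p * r" u v] by simp
    ultimately have "homog (m1 + m2) (pCons a p * r) u v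
           = smult a (v ^ m1 * homog m2 r u v) + u * (homog k p u v * homog m2 r u v)"
      unfolding split homog_add IH by simp
    also have "\<dots> = homog m1 (pCons a p) u v * homog m2 r u v"
      using Suc by (simp add: homog_pCons algebra_simps)
    finally show ?thesis .
  qed
qed simp

lemma homog_pcompose_linear:
  assumes "degree p \<le> m" "degree r \<le> 1"
  shows "homog m (pcompose p r) u v = homog m p (homog 1 r u v) v"
  using assms(1)
proof (induction p arbitrary: m rule: pCons_induct)
  case (pCons a p)
  show ?case
  proof (cases m)
    case 0
    hence "pCons a p = [:a:]"
      using pCons.prems by (cases "p = 0") auto
    thus ?thesis
      using 0 by (simp add: homog_def)
  next
    case (Suc k)
    have deg_p: "degree p \<le> k"
      using pCons.prems Suc by (auto split: if_splits)
    have "degree (pcompose p r) \<le> degree p * degree r"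
      by (rule degree_pcompose_le)
    also have "\<dots> \<le> k * 1"
      using deg_p assms(2) by (intro mult_le_mono)
    finally have "degree (pcompose p r) \<le> k"
      by simp
    hence "homog (Suc k) (r * pcompose p r) u v = homog 1 r u v * homog k (pcompose p r) u v"
      using homog_mult[OF assms(2), of "pcompose p r" k u v] by simp
    moreover have "homog (Suc k) [:a:] u v = smult a (v ^ Suc k)"
      using homog_monom[of 0 "Suc k" a u v] by (simp add: monom_0)
    ultimately show ?thesis
      using Suc pCons.IH[OF deg_p] by (simp add: pcompose_pCons homog_add homog_pCons)
  qed
qed simp

lemma homog_compose_right: "pcompose (homog m p u v) s = homog m p (pcompose u s) (pcompose v s)"
  by (simp add: homog_def pcompose_sum pcompose_smult pcompose_mult pcompose_power_left)

text \<open>Changing the first argument changes the homogenisation by a multiple of the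
  difference, since \<open>u - u'\<close> divides \<open>u\<^sup>i - u'\<^sup>i\<close>.\<close>

lemma homog_diff_dvd: "u - u' dvd homog m p u v - homog m p u' v"
proof -
  have "homog m p u v - homog m p u' v = (\<Sum>i\<le>m. smult (coeff p i) ((u ^ i - u' ^ i) * v ^ (m - i)))"
    by (simp add: homog_def algebra_simps flip: sum_subtractf smult_diff_right)
  also have "u - u' dvd \<dots>"
    by (intro dvd_sum dvd_smult dvd_mult2) (simp add: power_diff_sumr2)
  finally show ?thesis .
qed

lemma homog_monic_linear:
  fixes p :: "'a::field poly"
  assumes "degree p \<le> m"
  shows "degree (homog m p [:a, 1:] [:b, 1:]) \<le> m"
    and "coeff (homog m p [:a, 1:] [:b, 1:]) m = poly p 1"
proof -
  have deg: "degree ([:a, 1:] ^ i * [:b, 1:] ^ (m - i)) = m" and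
    lead: "coeff ([:a, 1:] ^ i * [:b, 1:] ^ (m - i)) m = 1" if "i \<le> m" for i
  proof -
    show "degree ([:a, 1:] ^ i * [:b, 1:] ^ (m - i)) = m"
      using that by (simp add: degree_mult_eq degree_power_eq)
    moreover have "lead_coeff ([:a, 1:] ^ i * [:b, 1:] ^ (m - i)) = 1"
      by (simp add: lead_coeff_mult lead_coeff_power)
    ultimately show "coeff ([:a, 1:] ^ i * [:b, 1:] ^ (m - i)) m = 1"
      by simp
  qed
  show "degree (homog m p [:a, 1:] [:b, 1:]) \<le> m"
    unfolding homog_def
  proof (intro degree_sum_le)
    fix i assume "i \<in> {..m}"
    thus "degree (smult (coeff p i) ([:a, 1:] ^ i * [:b, 1:] ^ (m - i))) \<le> m"
      using deg[of i] degree_smult_le[of "coeff p i"] by (metis atMost_iff)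
  qed simp
  have "coeff (homog m p [:a, 1:] [:b, 1:]) m = (\<Sum>i\<le>m. coeff p i)"
    by (simp add: homog_def coeff_sum lead)
  also have "\<dots> = poly (\<Sum>i\<le>m. monom (coeff p i) i) 1"
    by (simp add: poly_sum poly_monom)
  also have "\<dots> = poly p 1"
    using assms by (simp add: poly_as_sum_of_monoms')
  finally show "coeff (homog m p [:a, 1:] [:b, 1:]) m = poly p 1" .
qed

text \<open>If \<open>u\<close> has larger degree than \<open>v\<close>, the term \<open>p\<^sub>m u\<^sup>m\<close> dominates the homogenisation.\<close>

lemma degree_homog_dominant:
  fixes p u v :: "'a::idom poly"
  assumes "degree p = m" "p \<noteq> 0" "degree v < degree u"
  shows "degree (homog m p u v) = m * degree u"
proof (cases "m = 0")
  case False
  define g where "g i = smult (coeff p i) (u ^ i * v ^ (m - i))" for i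
  have "homog m p u v = g m + (\<Sum>i<m. g i)"
    unfolding homog_def g_def by (simp add: lessThan_Suc_atMost[symmetric])
  moreover have "degree (g m) = m * degree u"
  proof -
    have "u \<noteq> 0" "coeff p m \<noteq> 0"
      using assms by auto
    thus ?thesis
      by (simp add: g_def degree_power_eq)
  qed
  moreover have "degree (\<Sum>i<m. g i) < m * degree u"
  proof (rule degree_sum_less)
    fix i assume "i \<in> {..<m}"
    hence "degree (g i) \<le> i * degree u + (m - i) * degree v"
      unfolding g_def
      by (intro order.trans[OF degree_smult_le] order.trans[OF degree_mult_le] add_mono
          order.trans[OF degree_power_le]) simp_all
    also have "\<dots> < i * degree u + (m - i) * degree u"
      using \<open>i \<in> {..<m}\<close> assms(3) by simp
    also have "\<dots> = m * degree u"
      using \<open>i \<in> {..<m}\<close> by (simp flip: add_mult_distrib)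
    finally show "degree (g i) < m * degree u" .
  qed (use False assms(3) in simp)
  ultimately show ?thesis
    by (simp add: degree_add_eq_left)
qed (simp add: homog_def)

text \<open>Euler's identity for the homogenisation, differentiating in \<open>v\<close> only:
  if \<open>u' = 0\<close> then \<open>v \<cdot> (v\<^sup>m p(u/v))' = v' \<cdot> v\<^sup>m E(u/v)\<close> with \<open>E = m p - X p'\<close>.\<close>

lemma homog_euler:
  fixes p u v :: "'b::idom poly"
  assumes "pderiv u = 0" "degree p \<le> m"
  shows "v * pderiv (homog m p u v) = pderiv v * homog m (smult (of_nat m) p - monom 1 1 * pderiv p) u v"
proof -
  define E where "E = smult (of_nat m) p - monom 1 1 * pderiv p"
  have coeff_E: "coeff E i = of_nat (m - i) * coeff p i" if "i \<le> m" for i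
  proof -
    have "coeff (monom 1 1 * pderiv p) i = of_nat i * coeff p i"
      by (cases i) (simp_all add: coeff_monom_mult coeff_pderiv monom_Suc)
    thus ?thesis
      using that by (simp add: E_def algebra_simps)
  qed
  have summand: "v * pderiv (u ^ i * v ^ (m - i)) = pderiv v * (of_nat (m - i) * (u ^ i * v ^ (m - i)))"
    for i
  proof -
    have "pderiv (u ^ i) = 0"
      using assms(1) by (simp add: pderiv_power)
    hence "v * pderiv (u ^ i * v ^ (m - i)) = u ^ i * (v * pderiv (v ^ (m - i)))"
      by (simp add: pderiv_mult mult_ac)
    moreover have "v * pderiv (v ^ (m - i)) = smult (of_nat (m - i)) (v ^ (m - i)) * pderiv v"
    proof (cases "m - i")
      case (Suc k)
      thus ?thesis
        by (simp only: pderiv_power_Suc) (simp add: mult_ac)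
    qed simp
    ultimately show ?thesis
      by (simp add: of_nat_poly mult_ac)
  qed
  have "v * pderiv (homog m p u v) = (\<Sum>i\<le>m. smult (coeff p i) (v * pderiv (u ^ i * v ^ (m - i))))"
    by (simp add: homog_def pderiv_sum pderiv_smult sum_distrib_left mult_smult_right)
  also have "\<dots> = pderiv v * homog m E u v"
    by (simp add: summand coeff_E homog_def sum_distrib_left of_nat_poly algebra_simps)
  finally show ?thesis
    by (simp add: E_def)
qed

section \<open>Evaluation in the algebraic closure\<close>

text \<open>Roots of polynomials over \<open>'a\<close> are taken in the algebraic closure \<open>'a alg_closure\<close>.\<close>

definition aeval :: "'a::field poly \<Rightarrow> 'a alg_closure \<Rightarrow> 'a alg_closure" where
  "aeval p x = poly (map_poly to_ac p) x"

lemma aeval_pCons [simp]: "aeval (pCons a p) x = to_ac a + x * aeval p x"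
  by (simp add: aeval_def map_poly_pCons)

lemma aeval_0 [simp]: "aeval 0 x = 0"
  by (simp add: aeval_def)

lemma aeval_add [simp]: "aeval (p + r) x = aeval p x + aeval r x"
  by (induction p r rule: poly_induct2) (simp_all add: algebra_simps)

lemma aeval_smult [simp]: "aeval (smult c p) x = to_ac c * aeval p x"
  by (induction p) (simp_all add: algebra_simps)

lemma aeval_minus [simp]: "aeval (- p) x = - aeval p x"
  by (induction p) (simp_all add: algebra_simps)

lemma aeval_diff [simp]: "aeval (p - r) x = aeval p x - aeval r x"
  using aeval_add[of p "- r" x] by simp

lemma aeval_mult [simp]: "aeval (p * r) x = aeval p x * aeval r x"
  by (induction p) (simp_all add: algebra_simps)

lemma aeval_1 [simp]: "aeval 1 x = 1"
  by (simp add: one_pCons)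

lemma aeval_power [simp]: "aeval (p ^ k) x = aeval p x ^ k"
  by (induction k) simp_all

lemma aeval_sum [simp]: "aeval (\<Sum>i\<in>A. p i) x = (\<Sum>i\<in>A. aeval (p i) x)"
  by (induction A rule: infinite_finite_induct) simp_all

lemma aeval_monom [simp]: "aeval (monom c k) x = to_ac c * x ^ k"
  by (simp add: aeval_def map_poly_monom poly_monom)

lemma aeval_as_sum:
  assumes "degree p \<le> m"
  shows "aeval p x = (\<Sum>i\<le>m. to_ac (coeff p i) * x ^ i)"
proof -
  have "p = (\<Sum>i\<le>m. monom (coeff p i) i)"
    using assms by (simp add: poly_as_sum_of_monoms')
  hence "aeval p x = aeval (\<Sum>i\<le>m. monom (coeff p i) i) x"
    by (rule arg_cong)
  thus ?thesis
    by simp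
qed

lemma aeval_dvd:
  assumes "p dvd r" "aeval p x = 0"
  shows "aeval r x = 0"
  using assms by (elim dvdE) simp

lemma aeval_root_exists:
  assumes "degree p > 0"
  shows "\<exists>x. aeval p x = 0"
  using alg_closed_imp_poly_has_root[of "map_poly to_ac p"] assms
  by (simp add: aeval_def degree_map_poly)

text \<open>A nonzero polynomial of least degree vanishing at \<open>w\<close> divides every polynomial
  vanishing at \<open>w\<close> (the remainder would be a smaller one).\<close>

lemma least_degree_root_poly_dvd:
  fixes s r :: "'a::field poly"
  assumes s: "s \<noteq> 0" "aeval s w = 0"
    and least: "\<And>s'. s' \<noteq> 0 \<Longrightarrow> aeval s' w = 0 \<Longrightarrow> degree s \<le> degree s'"
    and r: "aeval r w = 0"
  shows "s dvd r"
proof -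
  have "aeval (r mod s) w = aeval r w - aeval s w * aeval (r div s) w"
    by (metis add_diff_cancel_left' aeval_add aeval_mult div_mult_mod_eq mult.commute)
  hence "aeval (r mod s) w = 0"
    using s r by simp
  moreover have "r mod s \<noteq> 0 \<Longrightarrow> degree (r mod s) < degree s"
    using s(1) by (rule degree_mod_less')
  ultimately have "r mod s = 0"
    using least[of "r mod s"] by fastforce
  thus ?thesis
    by (simp add: mod_eq_0_iff_dvd)
qed

text \<open>Hence an irreducible polynomial divides every polynomial with which it shares a
  root: it is divisible by the least-degree polynomial vanishing there, hence associated
  to it.\<close>

lemma irreducible_dvd_of_common_root:
  fixes p r :: "'a::field poly"
  assumes irr: "irreducible p" and "aeval p w = 0" "aeval r w = 0"
  shows "p dvd r"
proof -
  have "p \<noteq> 0"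
    using irr by auto
  then obtain s where s: "s \<noteq> 0" "aeval s w = 0"
    and least: "\<And>s'. s' \<noteq> 0 \<Longrightarrow> aeval s' w = 0 \<Longrightarrow> degree s \<le> degree s'"
    using ex_has_least_nat[of "\<lambda>s. s \<noteq> 0 \<and> aeval s w = 0" p degree] assms(2) by blast
  have "s dvd p" "s dvd r"
    using least_degree_root_poly_dvd[OF s least] assms(2,3) by blast+
  moreover have "\<not> is_unit s"
    using s by (auto elim!: is_unit_polyE)
  ultimately have "p dvd s"
    using irr by (meson irreducibleD')
  thus ?thesis
    using \<open>s dvd r\<close> by (rule dvd_trans)
qed

lemma aeval_homog:
  "aeval (homog m p u v) x = (\<Sum>i\<le>m. to_ac (coeff p i) * aeval u x ^ i * aeval v x ^ (m - i))"
  by (simp add: homog_def mult.assoc)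

lemma aeval_homog_quotient:
  assumes "degree p \<le> m" "aeval v x \<noteq> 0"
  shows "aeval (homog m p u v) x = aeval v x ^ m * aeval p (aeval u x / aeval v x)"
proof -
  have "aeval v x ^ m * (aeval u x / aeval v x) ^ i = aeval u x ^ i * aeval v x ^ (m - i)"
    if "i \<le> m" for i
  proof -
    have "aeval v x ^ m = aeval v x ^ i * aeval v x ^ (m - i)"
      using that by (simp flip: power_add)
    thus ?thesis
      using assms(2) by (simp add: power_divide)
  qed
  thus ?thesis
    by (simp add: aeval_homog aeval_as_sum[OF assms(1)] sum_distrib_left mult_ac)
qed

lemma to_ac_power_card_power:
  "to_ac (c :: 'a::{field,finite}) ^ (card (UNIV :: 'a set) ^ j) = to_ac c"
  by (metis to_ac_power finite_field_power_card_power)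

lemma aeval_frobenius:
  fixes p :: "'a::{field,finite} poly"
  shows "aeval p (x ^ (card (UNIV :: 'a set) ^ j)) = aeval p x ^ (card (UNIV :: 'a set) ^ j)"
proof (induction p)
  case (pCons a p)
  thus ?case
    by (simp add: frobenius_add[OF CHAR_alg_closure] to_ac_power_card_power power_mult_distrib)
qed (use finite_field_card_ge_2[where 'a='a] in simp)

text \<open>A root \<open>z\<close> of a nonzero polynomial \<open>g\<close> over \<open>\<bbbF>\<^sub>q\<close> has a Frobenius period
  \<open>1 \<le> d \<le> deg g\<close>, i.e.\ \<open>z\<^sup>q\<^sup>^\<^sup>d = z\<close>: the conjugates \<open>z\<^sup>q\<^sup>^\<^sup>i\<close> are all roots of \<open>g\<close>, so two of
  \<open>z\<^sup>q\<^sup>^\<^sup>0, \<dots>, z\<^sup>q\<^sup>^\<^sup>d\<^sup>e\<^sup>g\<^sup> \<^sup>g\<close> coincide, and Frobenius is injective.\<close>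

lemma frobenius_period:
  fixes g :: "'a::{field,finite} poly"
  assumes "g \<noteq> 0" "aeval g z = 0"
  shows "\<exists>d. 1 \<le> d \<and> d \<le> degree g \<and> z ^ (card (UNIV :: 'a set) ^ d) = z"
proof -
  define q where "q = card (UNIV :: 'a set)"
  define R where "R = {x. poly (map_poly to_ac g) x = 0}"
  have G: "map_poly to_ac g \<noteq> 0"
    using assms(1) by (simp add: map_poly_eq_0_iff)
  have "(\<lambda>i. z ^ (q ^ i)) ` {0..degree g} \<subseteq> R"
    using assms(2) aeval_frobenius[of g z] finite_UNIV_card_ge_0[where 'a='a]
    by (auto simp: R_def aeval_def q_def)
  moreover have "card R \<le> degree g"
    using card_poly_roots_bound[OF G] by (simp add: R_def degree_map_poly)
  ultimately have "\<not> inj_on (\<lambda>i. z ^ (q ^ i)) {0..degree g}"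
    using poly_roots_finite[OF G] card_inj_on_le[of _ "{0..degree g}" R] by (force simp: R_def)
  then obtain i j where ij: "i < j" "j \<le> degree g" "z ^ (q ^ i) = z ^ (q ^ j)"
    unfolding inj_on_def by (metis atLeastAtMost_iff linorder_neqE_nat)
  have "(z ^ (q ^ (j - i))) ^ (q ^ i) = z ^ (q ^ i)"
    using ij by (simp add: q_def power_mult mult.commute flip: power_add power_mult)
  hence "z ^ (q ^ (j - i)) = z"
    unfolding q_def by (rule frobenius_inj[OF CHAR_alg_closure])
  thus ?thesis
    using ij by (intro exI[of _ "j - i"]) (auto simp: q_def)
qed

section \<open>Powers and multiplicative orders\<close>

lemma power_power_fixed:
  fixes x :: "'b::monoid_mult"
  assumes "x ^ m = x"
  shows "x ^ (m ^ k) = x"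
proof (induction k)
  case (Suc k)
  thus ?case
    using assms by (simp add: power_mult mult.commute)
qed simp

lemma power_power_twisted:
  fixes y c :: "'b::comm_monoid_mult"
  assumes "y ^ m = c * y" "c ^ m = c"
  shows "y ^ (m ^ k) = c ^ k * y"
proof (induction k)
  case (Suc k)
  have "y ^ (m ^ Suc k) = (y ^ (m ^ k)) ^ m"
    by (simp add: mult.commute flip: power_mult)
  also have "\<dots> = (c ^ m) ^ k * y ^ m"
    by (simp add: Suc power_mult_distrib mult.commute flip: power_mult)
  also have "\<dots> = c ^ Suc k * y"
    using assms by (simp add: mult_ac)
  finally show ?case .
qed simp

lemma order_dvd_exponent:
  fixes w :: "'b::monoid_mult"
  assumes "w ^ m = 1" "\<And>k. 0 < k \<Longrightarrow> k < m \<Longrightarrow> w ^ k \<noteq> 1" "m > 0" "w ^ k = 1"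
  shows "m dvd k"
proof -
  have "w ^ k = w ^ (m * (k div m) + k mod m)"
    by simp
  also have "\<dots> = (w ^ m) ^ (k div m) * w ^ (k mod m)"
    by (simp only: power_add power_mult)
  finally have "w ^ (k mod m) = 1"
    using assms(1,4) by simp
  hence "k mod m = 0"
    using assms(2)[of "k mod m"] mod_less_divisor[OF assms(3), of k] by linarith
  thus ?thesis
    by (simp add: dvd_eq_mod_eq_0)
qed

text \<open>The order of \<open>q\<close> modulo \<open>q\<^sup>n - 1\<close> is \<open>n\<close>: writing \<open>d = n a + r\<close> with \<open>r < n\<close>, we get
  \<open>q\<^sup>d - 1 \<equiv> q\<^sup>r - 1\<close> and \<open>0 \<le> q\<^sup>r - 1 < q\<^sup>n - 1\<close>.\<close>

lemma power_minus_one_dvd_imp_dvd: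
  fixes q :: nat
  assumes q: "q \<ge> 2" and n: "n > 0" and dvd: "q ^ n - 1 dvd q ^ d - 1"
  shows "n dvd d"
proof -
  define r where "r = d mod n"
  define Q :: int where "Q = int q ^ n"
  have "int q ^ d = int q ^ r * Q ^ (d div n)"
    by (metis Q_def mult.commute power_add power_mult r_def mod_div_mult_eq)
  hence split: "int q ^ d - 1 = int q ^ r * (Q ^ (d div n) - 1 ^ (d div n)) + (int q ^ r - 1)"
    by (simp add: algebra_simps)
  have "Q - 1 dvd int q ^ r * (Q ^ (d div n) - 1 ^ (d div n))"
    unfolding power_diff_sumr2 by (intro dvd_mult dvd_triv_left)
  moreover have "Q - 1 dvd int q ^ d - 1"
    using dvd q by (simp add: Q_def of_nat_diff flip: int_dvd_int_iff)
  ultimately have "Q - 1 dvd int q ^ r - 1"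
    unfolding split by (simp add: dvd_add_right_iff)
  moreover have "int q ^ r - 1 < Q - 1"
    using q n by (simp add: Q_def r_def power_strict_increasing)
  moreover have "0 \<le> int q ^ r - 1"
    using q by simp
  ultimately have "int q ^ r - 1 = 0"
    using zdvd_not_zless[of "int q ^ r - 1" "Q - 1"] by linarith
  hence "int (q ^ r) = int 1"
    by simp
  hence "q ^ r = 1"
    by (simp only: of_nat_eq_iff)
  hence "r = 0"
    using q by (simp add: power_eq_1_iff)
  thus ?thesis
    by (simp add: r_def dvd_eq_mod_eq_0)
qed

section \<open>The construction\<close>

text \<open>The hypotheses of the theorem, with \<open>Q = q\<^sup>n\<close> carried as a parameter for readability.\<close>

locale primitive_construction =
  fixes f :: "'a::{field,finite} poly" and \<beta> \<gamma> :: 'a and n Q :: nat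
  assumes Q_def: "Q = card (UNIV :: 'a set) ^ n"
    and n_pos: "n \<ge> 1" and Q_gt_2: "Q > 2" and beta_gamma: "\<beta> \<noteq> - \<gamma>"
    and primitive: "primitive_poly n f" and f_ne: "f \<noteq> [:-1, 1:]"
begin

abbreviation "U \<equiv> monom 1 Q + [:\<beta>:]"
abbreviation "P \<equiv> [:\<beta>, 1:]"
abbreviation "V \<equiv> [:-\<gamma>, 1:]"
abbreviation "N \<equiv> hom_num n \<beta> \<gamma> f"
abbreviation "D \<equiv> den_poly n \<beta> \<gamma> f"

lemma degree_f: "degree f = n"
  using primitive by (simp add: primitive_poly_def)

lemma monic_f: "lead_coeff f = 1"
  using primitive by (auto simp: primitive_poly_def)

lemma irreducible_f: "irreducible f"
  using primitive by (simp add: primitive_poly_def)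

lemma f_dvd_unity: "f dvd monom 1 (Q - 1) - 1"
  using primitive by (simp add: primitive_poly_def Q_def)

lemma f_not_dvd_unity: "0 < k \<Longrightarrow> k < Q - 1 \<Longrightarrow> \<not> f dvd monom 1 k - 1"
  using primitive by (simp add: primitive_poly_def Q_def)

lemma beta_plus_gamma: "\<beta> + \<gamma> \<noteq> 0"
  using beta_gamma by (simp add: eq_neg_iff_add_eq_0)

lemma Q_ge_3: "Q \<ge> 3"
  using Q_gt_2 by simp

lemma of_nat_Q: "of_nat Q = (0::'a)"
  using n_pos finite_field_of_nat_card[where 'a='a] by (simp add: Q_def of_nat_power power_0_left)

lemma N_homog: "N = homog n f U V"
  by (simp add: hom_num_def homog_def Q_def)

text \<open>\<open>h\<^sup>*(x) = x\<^sup>n h(1/x) = x\<^sup>n f((\<beta>+\<gamma>)/x + 1) = x\<^sup>n f((x + \<beta> + \<gamma>)/x)\<close>, so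
  \<open>D(x) = h\<^sup>*(x-\<gamma>) = (x-\<gamma>)\<^sup>n f((x+\<beta>)/(x-\<gamma>))\<close>.\<close>

lemma D_homog: "D = homog n f P V"
proof -
  have "h_star n \<beta> \<gamma> f = homog n (h_poly \<beta> \<gamma> f) 1 (monom 1 1)"
    by (simp add: h_star_def homog_def monom_altdef)
  also have "\<dots> = homog n f (homog 1 [:1, \<beta> + \<gamma>:] 1 (monom 1 1)) (monom 1 1)"
    unfolding h_poly_def by (rule homog_pcompose_linear) (simp_all add: degree_f)
  also have "homog 1 [:1, \<beta> + \<gamma>:] 1 (monom 1 1) = [:\<beta> + \<gamma>, 1:]"
    by (simp add: homog_def monom_Suc)
  finally have "D = pcompose (homog n f [:\<beta> + \<gamma>, 1:] (monom 1 1)) V"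
    by (simp add: den_poly_def)
  also have "\<dots> = homog n f P V"
    by (simp add: homog_compose_right pcompose_pCons monom_altdef)
  finally show ?thesis .
qed

text \<open>\<open>f\<close> divides \<open>X\<^sup>Q - X\<close>, so \<open>D = V\<^sup>n f(P/V)\<close> divides the homogenisation
  \<open>V\<^sup>Q((P/V)\<^sup>Q - P/V) = P\<^sup>Q - P V\<^sup>Q\<^sup>-\<^sup>1\<close> of \<open>X\<^sup>Q - X\<close> at \<open>(P, V)\<close>.\<close>

lemma D_dvd_homog_field_poly: "D dvd P ^ Q - P * V ^ (Q - 1)"
proof -
  have "monom 1 Q - monom 1 1 = monom 1 1 * (monom 1 (Q - 1) - (1 :: 'a poly))"
    using Suc_pred'[of Q] Q_ge_3 by (simp add: algebra_simps mult_monom)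
  hence "f dvd monom 1 Q - monom 1 1"
    using f_dvd_unity by (simp add: dvd_mult)
  then obtain k where k: "monom 1 Q - monom 1 1 = f * k"
    by (elim dvdE)
  have "degree (monom 1 Q + - monom 1 1 :: 'a poly) = Q"
    using Q_ge_3 by (subst degree_add_eq_left) (simp_all add: degree_monom_eq)
  hence deg_fk: "degree (f * k) = Q"
    using k by simp
  hence "f \<noteq> 0" "k \<noteq> 0"
    using Q_ge_3 by auto
  hence "degree (f * k) = n + degree k"
    by (simp add: degree_mult_eq degree_f)
  hence deg_k: "degree k = Q - n" and n_le_Q: "n \<le> Q"
    using deg_fk by simp_all
  have "homog (n + (Q - n)) (f * k) P V = D * homog (Q - n) k P V"
    by (simp add: homog_mult degree_f deg_k D_homog)
  moreover have "homog Q (monom 1 Q - monom 1 1) P V = P ^ Q - P * V ^ (Q - 1)"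
    using Q_ge_3 by (simp add: homog_diff homog_monom)
  ultimately have "P ^ Q - P * V ^ (Q - 1) = D * homog (Q - n) k P V"
    using k n_le_Q by simp
  thus ?thesis
    by (rule dvdI)
qed

text \<open>By the Frobenius identities \<open>P\<^sup>Q = X\<^sup>Q + \<beta>\<close> and \<open>V\<^sup>Q = X\<^sup>Q - \<gamma>\<close>,
  \<open>V P\<^sup>Q - P V\<^sup>Q = (\<beta> + \<gamma>)(X - X\<^sup>Q)\<close>.\<close>

lemma frobenius_cross_difference: "V * P ^ Q - P * V ^ Q = smult (\<beta> + \<gamma>) (monom 1 1 - monom 1 Q)"
proof -
  have "P = monom 1 1 + [:\<beta>:]" "V = monom 1 1 - [:\<gamma>:]"
    by (simp_all add: monom_Suc)
  moreover have "P ^ Q = monom 1 Q + [:\<beta>:]" "V ^ Q = monom 1 Q - [:\<gamma>:]"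
    using linear_power_card_power[of \<beta> n] linear_power_card_power[of "-\<gamma>" n]
    by (simp_all add: Q_def)
  moreover have "(x - c) * (y + b) - (x + b) * (y - c) = (b + c) * (x - y)"
    for x y b c :: "'a poly"
    by (simp add: algebra_simps)
  ultimately show ?thesis
    by simp
qed

text \<open>Multiplying by \<open>V\<close>: \<open>D\<close> divides \<open>(\<beta> + \<gamma>)(X - X\<^sup>Q)\<close>, hence \<open>X\<^sup>Q - X\<close>.\<close>

lemma D_dvd_X_power_Q_minus_X: "D dvd monom 1 Q - monom 1 1"
proof -
  have "V ^ (Q - 1) * V = V ^ Q"
    using Q_ge_3 by (intro power_minus_mult) simp
  hence "(P ^ Q - P * V ^ (Q - 1)) * V = V * P ^ Q - P * V ^ Q"
    by (simp only: algebra_simps)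
  hence "D dvd smult (\<beta> + \<gamma>) (monom 1 1 - monom 1 Q)"
    using D_dvd_homog_field_poly frobenius_cross_difference by (metis dvd_mult2)
  hence "D dvd monom 1 1 - monom 1 Q"
    using beta_plus_gamma by (rule dvd_smult_cancel)
  thus ?thesis
    by (simp only: dvd_diff_commute)
qed

lemma D_dvd_N: "D dvd N"
proof -
  have "U - P = monom 1 Q - monom 1 1"
    using Q_ge_3 by (intro poly_eqI) (auto simp: coeff_monom coeff_pCons split: nat.split)
  hence "D dvd U - P"
    using D_dvd_X_power_Q_minus_X by (simp only:)
  also have "U - P dvd N - D"
    unfolding N_homog D_homog by (rule homog_diff_dvd)
  finally have "D dvd (N - D) + D"
    by (rule dvd_add) simp
  thus ?thesis
    by simp
qed

lemma f_at_1: "poly f 1 \<noteq> 0"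
proof
  assume "poly f 1 = 0"
  then obtain t where t: "f = [:-1, 1:] * t"
    by (auto simp: poly_eq_0_iff_dvd elim: dvdE)
  have "\<not> is_unit [:-1, 1::'a:]"
    by (simp add: is_unit_poly_iff)
  hence "is_unit t"
    using Factorial_Ring.irreducibleD[OF irreducible_f t] by blast
  then obtain c where "t = [:c:]"
    by (elim is_unit_polyE)
  hence f_eq: "f = smult c [:-1, 1:]"
    using t by simp
  hence "c = 1"
    using monic_f by (cases "c = 0") simp_all
  hence "f = [:-1, 1:]"
    using f_eq by simp
  with f_ne show False ..
qed

lemma degree_D: "degree D = n"
  using homog_monic_linear[of f n \<beta> "-\<gamma>"] f_at_1
  by (simp add: D_homog degree_f le_antisym le_degree)

lemma degree_N: "degree N = n * Q"
proof -
  have "degree U = Q"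
    using Q_ge_3 by (simp add: degree_add_eq_left degree_monom_eq)
  moreover have "f \<noteq> 0"
    using irreducible_f by auto
  ultimately show ?thesis
    using Q_ge_3 by (simp add: N_homog degree_homog_dominant degree_f)
qed

lemma N_eq: "N = D * (N div D)"
  using D_dvd_N by simp

lemma F_dvd_N: "N div D dvd N"
  using N_eq by (metis dvd_triv_right)

lemma degree_F: "degree (N div D) = n * (Q - 1)"
proof -
  have "degree N > 0"
    using degree_N n_pos Q_ge_3 by simp
  hence "N \<noteq> 0"
    by auto
  hence "D \<noteq> 0" "N div D \<noteq> 0"
    using N_eq by auto
  hence "degree N = degree D + degree (N div D)"
    by (subst N_eq) (rule degree_mult_eq)
  thus ?thesis
    using degree_N degree_D by (simp add: diff_mult_distrib2)
qed

text \<open>A root \<open>z\<close> of \<open>N = V\<^sup>n f(U/V)\<close> yields the root \<open>w(z) = U(z)/V(z)\<close> of \<open>f\<close>.\<close>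

definition w_of :: "'a alg_closure \<Rightarrow> 'a alg_closure" where
  "w_of z = (z ^ Q + to_ac \<beta>) / (z - to_ac \<gamma>)"

lemma to_ac_power_Q: "to_ac (c :: 'a) ^ Q = to_ac c"
  unfolding Q_def by (rule to_ac_power_card_power)

lemma root_N_ne_gamma:
  assumes "aeval N z = 0"
  shows "z \<noteq> to_ac \<gamma>"
proof
  assume z: "z = to_ac \<gamma>"
  have "aeval N z = (\<Sum>i\<le>n. to_ac (coeff f i) * (z ^ Q + to_ac \<beta>) ^ i * (z - to_ac \<gamma>) ^ (n - i))"
    by (simp add: N_homog aeval_homog)
  also have "\<dots> = (\<Sum>i\<le>n. if i = n then (z ^ Q + to_ac \<beta>) ^ n else 0)"
    using z monic_f degree_f by (intro sum.cong refl) auto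
  also have "\<dots> = to_ac (\<gamma> + \<beta>) ^ n"
    using z by (simp add: to_ac_power_Q)
  finally have "to_ac (\<gamma> + \<beta>) ^ n = 0"
    using assms by (simp del: to_ac_add)
  hence "\<gamma> + \<beta> = 0"
    using n_pos by (simp del: to_ac_add)
  thus False
    using beta_plus_gamma by (simp add: add.commute)
qed

lemma root_N_w_of:
  assumes "aeval N z = 0"
  shows "aeval f (w_of z) = 0"
proof -
  have V: "aeval V z \<noteq> 0"
    using root_N_ne_gamma[OF assms] by simp
  have "aeval N z = aeval V z ^ n * aeval f (aeval U z / aeval V z)"
    unfolding N_homog using degree_f V by (intro aeval_homog_quotient) simp_all
  thus ?thesis
    using assms V by (simp add: w_of_def)
qed

lemma root_f_power: "aeval f w = 0 \<Longrightarrow> w ^ (Q - 1) = 1"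
  using aeval_dvd[OF f_dvd_unity] by simp

lemma root_f_power_Q: "aeval f w = 0 \<Longrightarrow> w ^ Q = w"
proof -
  have "Q = Suc (Q - 1)"
    using Q_ge_3 by simp
  hence "w ^ Q = w * w ^ (Q - 1)"
    by (metis power_Suc)
  thus "aeval f w = 0 \<Longrightarrow> w ^ Q = w"
    using root_f_power by simp
qed

lemma root_f_primitive:
  assumes "aeval f w = 0" "0 < k" "k < Q - 1"
  shows "w ^ k \<noteq> 1"
proof
  assume "w ^ k = 1"
  hence "aeval (monom 1 k - 1) w = 0"
    by simp
  hence "f dvd monom 1 k - 1"
    by (rule irreducible_dvd_of_common_root[OF irreducible_f assms(1)])
  with f_not_dvd_unity assms(2,3) show False
    by blast
qed

lemma root_f_nonzero: "aeval f w = 0 \<Longrightarrow> w \<noteq> 0"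
  using root_f_power[of w] Q_ge_3 by (auto simp: power_0_left)

text \<open>\<open>f\<close> is separable: it divides \<open>X\<^sup>Q\<^sup>-\<^sup>1 - 1\<close>, whose derivative \<open>-X\<^sup>Q\<^sup>-\<^sup>2\<close> does not
  vanish at nonzero points.\<close>

lemma of_nat_Q_minus_1: "of_nat (Q - 1) = (-1 :: 'a)"
  using of_nat_Q Q_ge_3 by (simp add: of_nat_diff)

lemma root_f_simple:
  assumes "aeval f w = 0"
  shows "aeval (pderiv f) w \<noteq> 0"
proof
  assume f'w: "aeval (pderiv f) w = 0"
  obtain k where k: "monom 1 (Q - 1) - 1 = f * k"
    using f_dvd_unity by (elim dvdE)
  have "pderiv (monom 1 (Q - 1) - 1 :: 'a poly) = monom (-1) (Q - 1 - 1)"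
    using of_nat_Q_minus_1 by (simp add: pderiv_diff pderiv_monom)
  hence "aeval (pderiv (f * k)) w = - (w ^ (Q - 1 - 1))"
    unfolding k[symmetric] by simp
  moreover have "aeval (pderiv (f * k)) w = 0"
    using assms f'w by (simp add: pderiv_mult)
  ultimately show False
    using root_f_nonzero[OF assms] by simp
qed

lemma pderiv_U: "pderiv U = 0"
  using of_nat_Q by (simp add: pderiv_add pderiv_monom)

text \<open>\<open>N\<close> has only simple roots: as \<open>U' = 0\<close>, Euler's identity gives
  \<open>V N' = V\<^sup>n (n f(w) - w f'(w)) = -V\<^sup>n w f'(w)\<close> at a root \<open>z\<close> of \<open>N\<close>, with \<open>w = w(z)\<close>, and
  \<open>f\<close> is separable.\<close>

lemma root_N_simple:
  assumes Nz: "aeval N z = 0"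
  shows "aeval (pderiv N) z \<noteq> 0"
proof
  assume N'z: "aeval (pderiv N) z = 0"
  define w where "w = w_of z"
  have fw: "aeval f w = 0"
    using root_N_w_of[OF Nz] by (simp add: w_def)
  have V: "aeval V z \<noteq> 0"
    using root_N_ne_gamma[OF Nz] by simp
  define E where "E = smult (of_nat n) f - monom 1 1 * pderiv f"
  have "degree (monom 1 1 * pderiv f) \<le> n"
    using degree_mult_le[of "monom 1 1" "pderiv f"] degree_pderiv_le[of f] n_pos
    by (simp add: degree_f degree_monom_eq)
  hence deg_E: "degree E \<le> n"
    unfolding E_def by (intro degree_diff_le) (simp_all add: degree_f)
  have "V * pderiv N = homog n E U V"
    using homog_euler[OF pderiv_U, of f n V] by (simp add: N_homog E_def degree_f pderiv_pCons)
  hence "aeval V z * aeval (pderiv N) z = aeval (homog n E U V) z"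
    by (metis aeval_mult)
  also have "\<dots> = aeval V z ^ n * aeval E w"
    using aeval_homog_quotient[OF deg_E V, of U] by (simp add: w_def w_of_def)
  finally have "aeval E w = 0"
    using N'z V by simp
  hence "w * aeval (pderiv f) w = 0"
    using fw by (simp add: E_def)
  thus False
    using root_f_nonzero[OF fw] root_f_simple[OF fw] by simp
qed

text \<open>A root \<open>z \<in> \<bbbF>\<^sub>Q\<close> of \<open>N\<close> is a root of \<open>D\<close>, since then \<open>U(z) = P(z)\<close>.\<close>

lemma root_N_in_FQ_root_D:
  assumes Nz: "aeval N z = 0" and zQ: "z ^ Q = z"
  shows "aeval D z = 0"
proof -
  have V: "aeval V z \<noteq> 0"
    using root_N_ne_gamma[OF Nz] by simp
  have "aeval D z = aeval V z ^ n * aeval f (aeval P z / aeval V z)"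
    unfolding D_homog using degree_f V by (intro aeval_homog_quotient) simp_all
  also have "aeval P z / aeval V z = w_of z"
    using zQ by (simp add: w_of_def)
  finally show ?thesis
    using root_N_w_of[OF Nz] by simp
qed

text \<open>Hence no irreducible factor \<open>g\<close> of \<open>F\<close> has a root \<open>z \<in> \<bbbF>\<^sub>Q\<close>: \<open>g\<close> would divide both
  \<open>D\<close> and \<open>F\<close>, so \<open>g\<^sup>2\<close> would divide \<open>N = D F\<close> and \<open>z\<close> would be a multiple root of \<open>N\<close>.\<close>

lemma factor_root_not_in_FQ:
  assumes g: "irreducible g" "g dvd N div D" "aeval g z = 0"
  shows "z ^ Q \<noteq> z"
proof
  assume zQ: "z ^ Q = z"
  have Nz: "aeval N z = 0"
    using dvd_trans[OF g(2) F_dvd_N] g(3) by (rule aeval_dvd)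
  have "g dvd D"
    using g(1,3) root_N_in_FQ_root_D[OF Nz zQ] by (rule irreducible_dvd_of_common_root)
  hence "g * g dvd D * (N div D)"
    using g(2) by (rule mult_dvd_mono)
  hence "aeval (pderiv N) z = 0"
    using g(3) N_eq by (metis aeval_dvd square_dvd_imp_dvd_pderiv)
  with root_N_simple[OF Nz] show False ..
qed

text \<open>Frobenius powers fix \<open>\<beta>\<close> and \<open>\<gamma>\<close>, so they commute with \<open>w\<close>.\<close>

lemma w_of_frobenius:
  assumes "z ^ (card (UNIV :: 'a set) ^ d) = z"
  shows "w_of z ^ (card (UNIV :: 'a set) ^ d) = w_of z"
proof -
  let ?m = "card (UNIV :: 'a set) ^ d"
  have "(z ^ Q) ^ ?m = (z ^ ?m) ^ Q"
    by (simp add: mult.commute flip: power_mult)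
  hence "(z ^ Q + to_ac \<beta>) ^ ?m = z ^ Q + to_ac \<beta>"
    using assms by (simp add: frobenius_add[OF CHAR_alg_closure] to_ac_power_card_power)
  moreover have "(z - to_ac \<gamma>) ^ ?m = z - to_ac \<gamma>"
    using assms by (simp add: frobenius_diff[OF CHAR_alg_closure] to_ac_power_card_power)
  ultimately show ?thesis
    by (simp add: w_of_def power_divide)
qed

text \<open>Hence a Frobenius period \<open>d\<close> of a root of \<open>N\<close> is one of \<open>w\<close>; since \<open>w\<close> has order
  \<open>q\<^sup>n - 1\<close>, this forces \<open>n dvd d\<close>.\<close>

lemma frobenius_period_multiple:
  assumes "aeval N z = 0" "z ^ (card (UNIV :: 'a set) ^ d) = z"
  shows "n dvd d"
proof -
  let ?m = "card (UNIV :: 'a set) ^ d"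
  define w where "w = w_of z"
  have fw: "aeval f w = 0"
    using root_N_w_of[OF assms(1)] by (simp add: w_def)
  have "?m > 0"
    using finite_UNIV_card_ge_0[where 'a='a] by simp
  hence "w * w ^ (?m - 1) = w * 1"
    using w_of_frobenius[OF assms(2)] by (simp add: w_def flip: power_Suc)
  hence "w ^ (?m - 1) = 1"
    using root_f_nonzero[OF fw] by simp
  hence "Q - 1 dvd ?m - 1"
    using Q_ge_3 by (intro order_dvd_exponent[OF root_f_power[OF fw] root_f_primitive[OF fw]]) simp_all
  hence "card (UNIV :: 'a set) ^ n - 1 dvd ?m - 1"
    by (simp only: Q_def)
  thus ?thesis
    using power_minus_one_dvd_imp_dvd[OF finite_field_card_ge_2[where 'a='a]] n_pos by simp
qed

text \<open>After a translation by a point \<open>x\<^sub>0\<close> of \<open>\<bbbF>\<^sub>Q\<close>, the \<open>Q\<close>-Frobenius acts on a root \<open>z\<close>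
  of \<open>N\<close> as multiplication by \<open>w(z)\<close>: \<open>z\<^sup>Q + \<beta> = w(z - \<gamma>)\<close> and
  \<open>x\<^sub>0 = (\<beta> + w\<gamma>)/(w - 1)\<close> is the fixed point of this affine relation.\<close>

lemma twisted_frobenius:
  assumes "aeval N z = 0"
  obtains x0 where "x0 ^ Q = x0" "(z - x0) ^ Q = w_of z * (z - x0)"
proof -
  define w where "w = w_of z"
  have fw: "aeval f w = 0"
    using root_N_w_of[OF assms] by (simp add: w_def)
  have wQ: "w ^ Q = w"
    using root_f_power_Q[OF fw] .
  have "w \<noteq> 1"
    using root_f_primitive[OF fw, of 1] Q_ge_3 by auto
  define x0 where "x0 = (to_ac \<beta> + w * to_ac \<gamma>) / (w - 1)"
  have x0: "x0 * (w - 1) = to_ac \<beta> + w * to_ac \<gamma>"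
    using \<open>w \<noteq> 1\<close> by (simp add: x0_def)
  have "(to_ac \<beta> + w * to_ac \<gamma>) ^ Q = to_ac \<beta> + w * to_ac \<gamma>"
    by (simp add: Q_def frobenius_add[OF CHAR_alg_closure] power_mult_distrib
        to_ac_power_card_power wQ[unfolded Q_def])
  moreover have "(w - 1) ^ Q = w - 1"
    by (simp add: Q_def frobenius_diff[OF CHAR_alg_closure] wQ[unfolded Q_def])
  ultimately have "x0 ^ Q = x0"
    by (simp add: x0_def power_divide)
  moreover have "z ^ Q = w * (z - to_ac \<gamma>) - to_ac \<beta>"
    using root_N_ne_gamma[OF assms] by (simp add: w_def w_of_def)
  hence "(z - x0) ^ Q = w * (z - x0)"
    using \<open>x0 ^ Q = x0\<close> x0
    by (simp add: Q_def frobenius_diff[OF CHAR_alg_closure] algebra_simps)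
  ultimately show ?thesis
    using that by (simp add: w_def)
qed

text \<open>If \<open>z \<notin> \<bbbF>\<^sub>Q\<close> is a root of \<open>N\<close> with Frobenius period \<open>d = n j\<close>, then \<open>z - x\<^sub>0\<close> is
  fixed by the \<open>Q\<^sup>j\<close>-Frobenius, which multiplies it by \<open>w\<^sup>j\<close>; so \<open>w\<^sup>j = 1\<close> and
  \<open>Q - 1 dvd j\<close>, i.e.\ \<open>d \<ge> n(Q - 1)\<close>.\<close>

lemma factor_degree_root_outside_FQ:
  assumes g: "irreducible g" "aeval g z = 0" and Nz: "aeval N z = 0" and zQ: "z ^ Q \<noteq> z"
  shows "n * (Q - 1) \<le> degree g"
proof -
  have "g \<noteq> 0"
    using g(1) by auto
  then obtain d where d: "1 \<le> d" "d \<le> degree g" "z ^ (card (UNIV :: 'a set) ^ d) = z"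
    using frobenius_period g(2) by blast
  obtain j where j: "d = n * j"
    using frobenius_period_multiple[OF Nz d(3)] by (elim dvdE)
  have zj: "z ^ (Q ^ j) = z"
    using d(3) by (simp add: Q_def j power_mult)
  define w where "w = w_of z"
  have fw: "aeval f w = 0"
    using root_N_w_of[OF Nz] by (simp add: w_def)
  obtain x0 where x0: "x0 ^ Q = x0" "(z - x0) ^ Q = w * (z - x0)"
    using twisted_frobenius[OF Nz] by (auto simp: w_def)
  have wQ: "w ^ Q = w"
    using root_f_power_Q[OF fw] .
  have "(z - x0) ^ (Q ^ j) = z ^ (Q ^ j) - x0 ^ (Q ^ j)"
    by (simp add: Q_def frobenius_diff[OF CHAR_alg_closure] flip: power_mult)
  also have "\<dots> = z - x0"
    using zj power_power_fixed[OF x0(1)] by simp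
  finally have "w ^ j * (z - x0) = z - x0"
    using power_power_twisted[OF x0(2) wQ] by simp
  moreover have "z \<noteq> x0"
    using x0(1) zQ by auto
  ultimately have "w ^ j = 1"
    by simp
  moreover have "j \<noteq> 0"
    using d(1) j by auto
  ultimately have "Q - 1 dvd j"
    using Q_ge_3 by (intro order_dvd_exponent[OF root_f_power[OF fw] root_f_primitive[OF fw]]) simp_all
  hence "Q - 1 \<le> j"
    using \<open>j \<noteq> 0\<close> by (simp add: dvd_imp_le)
  hence "n * (Q - 1) \<le> d"
    using j by simp
  thus ?thesis
    using d(2) by simp
qed

lemma irreducible_factor_degree:
  assumes g: "irreducible g" "g dvd N div D"
  shows "n * (Q - 1) \<le> degree g"
proof -
  have "g \<noteq> 0" "\<not> is_unit g"
    using g(1) by (auto simp: Factorial_Ring.irreducible_def)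
  hence "degree g > 0"
    by (simp add: is_unit_iff_degree)
  then obtain z where gz: "aeval g z = 0"
    using aeval_root_exists by blast
  have "aeval N z = 0"
    using dvd_trans[OF g(2) F_dvd_N] gz by (rule aeval_dvd)
  moreover have "z ^ Q \<noteq> z"
    using factor_root_not_in_FQ[OF g gz] .
  ultimately show ?thesis
    using factor_degree_root_outside_FQ[OF g(1) gz] by blast
qed

lemma irreducible_F: "irreducible (N div D)"
proof (rule Factorial_Ring.irreducibleI)
  have deg_F: "degree (N div D) > 0"
    using degree_F n_pos Q_ge_3 by simp
  thus "N div D \<noteq> 0"
    by auto
  thus "\<not> is_unit (N div D)"
    using deg_F by (simp add: is_unit_iff_degree)
  fix a b assume ab: "N div D = a * b"
  show "is_unit a \<or> is_unit b"
  proof (rule ccontr)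
    assume "\<not> (is_unit a \<or> is_unit b)"
    hence nonunits: "\<not> is_unit a" "\<not> is_unit b" by auto
    have "a \<noteq> 0" "b \<noteq> 0"
      using ab \<open>N div D \<noteq> 0\<close> by auto
    hence "degree a < degree (N div D)"
      using nonunits(2) ab by (simp add: degree_mult_eq is_unit_iff_degree)
    obtain g where g: "irreducible g" "g dvd a" "degree g \<le> degree a"
      using irreducible_factor_exists[OF \<open>a \<noteq> 0\<close> nonunits(1)] by blast
    have "g dvd N div D"
      using ab g(2) by simp
    hence "n * (Q - 1) \<le> degree g"
      using g(1) by (intro irreducible_factor_degree)
    thus False
      using g(3) \<open>degree a < degree (N div D)\<close> degree_F by simp
  qed
qed

end

theorem mainTheorem10:
  fixes f :: "'a::{field,finite} poly" and \<beta> \<gamma> :: 'a and n :: nat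
  assumes "n \<ge> 1" and "card (UNIV :: 'a set) ^ n > 2"
    and "\<beta> \<noteq> - \<gamma>"
    and "primitive_poly n f" and "f \<noteq> [:-1, 1:]"
  shows "den_poly n \<beta> \<gamma> f dvd hom_num n \<beta> \<gamma> f
       \<and> irreducible (hom_num n \<beta> \<gamma> f div den_poly n \<beta> \<gamma> f)
       \<and> degree (hom_num n \<beta> \<gamma> f div den_poly n \<beta> \<gamma> f) = n * (card (UNIV :: 'a set) ^ n - 1)"
proof -
  interpret primitive_construction f \<beta> \<gamma> n "card (UNIV :: 'a set) ^ n"
    using assms by unfold_locales simp_all
  show ?thesis
    using D_dvd_N irreducible_F degree_F by blast
qed

end
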